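(* Let $\mathbf C=(\mathbf C_\tau,q_n^{\mathbf C},\mathsf e_i^{\mathbf C})$ be a finite dimensional clone $\tau$-algebra and $\overline{\mathbf R}_{\mathbf C}$ the clone $\rho_{\mathbf C}$-algebra of $\mathbf C$-representable functions. Then: (i) $\overline{\mathbf R}_{\mathbf C}$ is minimal; (ii) $\mathbf C$ is minimal if and only if $R_{\mathbf C}=\mathrm{Clo}\,\mathbf C_\tau$.
   Context: A clone $\tau$-algebra is an algebra $\mathbf C=(C,\sigma^{\mathbf C}\ (\sigma\in\tau),q_n^{\mathbf C}\ (n\ge0),\mathsf e_i^{\mathbf C}\ (i\ge1))$ with $\mathsf e_i$ nullary, $q_n$ of arity $n+1$, satisfying: (C1) $q_n(\mathsf e_i,x_1,\dots,x_n)=x_i$ ($1\le i\le n$); (C2) $q_n(\mathsf e_j,x_1,\dots,x_n)=\mathsf e_j$ ($j>n$); (C3) $q_n(x,\mathsf e_1,\dots,\mathsf e_n)=x$; (C4) $q_k(x,y_1,\dots,y_k)=q_n(x,y_1,\dots,y_k,\mathsf e_{k+1},\dots,\mathsf e_n)$ ($n>k$); (C5) $q_n(q_n(x,\mathbf y),\mathbf z)=q_n(x,q_n(y_1,\mathbf z),\dots,q_n(y_n,\mathbf z))$; (C6) $q_n(\sigma(x_1,\dots,x_k),\mathbf y)=\sigma(q_n(x_1,\mathbf y),\dots,q_n(x_k,\mathbf y))$ for $\sigma\in\tau$ of arity $k$. $\mathbf C_\tau$ is the $\tau$-reduct. $a$ is independent of $\mathsf e_n$ if $q_n(a,\mathsf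 e_1,\dots,\mathsf e_{n-1},\mathsf e_{n+1})=a$; its dimension is the largest $n$ it depends on ($0$ if none, infinite if infinitely many); finite dimensional means every element has finite dimension. $\mathbf C$ is minimal if $C$ is the smallest subset containing all $\mathsf e_i^{\mathbf C}$ and closed under the operations $\sigma^{\mathbf C}$, $\sigma\in\tau$. A function $f:C^k\to C$ is $\mathbf C$-representable if $f(\mathsf e_1,\dots,\mathsf e_k)$ has dimension $\le k$ and $f(a_1,\dots,a_k)=q_k(f(\mathsf e_1,\dots,\mathsf e_k),a_1,\dots,a_k)$ for all $a_i$; $R_{\mathbf C}$ is the set of them. $\rho_{\mathbf C}$ has an operation symbol $\overline f$ of arity $k$ for each $k$-ary $f\in R_{\mathbf C}$, and $\overline{\mathbf R}_{\mathbf C}=(C,f\ (f\in R_{\mathbf C}),q_n^{\mathbf C},\mathsf e_i^{\mathbf C})$ is a clone $\rho_{\mathbf C}$-algebra. $\mathrm{Clo}\,\mathbf C_\tau$ is the clone of term operations of $\mathbf C_\tau$ (smallest set of finitary operations on $C$, nullary included, containing the projections and the basic operations and closed under composition and under restriction, i.e. dropping a last argument on which the operation does not depend). *)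

theory Defs
  imports Main
begin

text \<open>A clone tau-algebra is represented by: a carrier C :: 'a set; a set T of
operation symbols with arity function ar and interpretation sig (sig s takes a list
of length ar s); q n x ys stands for q_n(x, y_1, ..., y_n) (length ys = n);
e i stands for e_i (i >= 1; e 0 is unused).
Finitary operations on C are pairs (k, f) with f :: 'a list => 'a, normalized to be
undefined outside C^k.\<close>

definition es :: "(nat \<Rightarrow> 'a) \<Rightarrow> nat \<Rightarrow> 'a list" where
  "es e n = map e [1..<Suc n]"

definition tuples :: "'a set \<Rightarrow> nat \<Rightarrow> 'a list set" where
  "tuples C k = {xs. length xs = k \<and> set xs \<subseteq> C}"

definition ext_op :: "'a set \<Rightarrow> nat \<Rightarrow> ('a list \<Rightarrow> 'a) \<Rightarrow> ('a list \<Rightarrow> 'a)" where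
  "ext_op C k f = (\<lambda>xs. if xs \<in> tuples C k then f xs else undefined)"

definition clone_alg ::
  "'a set \<Rightarrow> 's set \<Rightarrow> ('s \<Rightarrow> nat) \<Rightarrow> ('s \<Rightarrow> 'a list \<Rightarrow> 'a)
    \<Rightarrow> (nat \<Rightarrow> 'a \<Rightarrow> 'a list \<Rightarrow> 'a) \<Rightarrow> (nat \<Rightarrow> 'a) \<Rightarrow> bool" where
  "clone_alg C T ar sig q e \<longleftrightarrow>
     (\<forall>i\<ge>1. e i \<in> C) \<and>
     (\<forall>s\<in>T. \<forall>xs\<in>tuples C (ar s). sig s xs \<in> C) \<and>
     (\<forall>n. \<forall>x\<in>C. \<forall>ys\<in>tuples C n. q n x ys \<in> C) \<and>
     \<comment> \<open>(C1)\<close>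
     (\<forall>n i. \<forall>xs\<in>tuples C n. 1 \<le> i \<and> i \<le> n \<longrightarrow> q n (e i) xs = xs ! (i - 1)) \<and>
     \<comment> \<open>(C2)\<close>
     (\<forall>n j. \<forall>xs\<in>tuples C n. j > n \<longrightarrow> q n (e j) xs = e j) \<and>
     \<comment> \<open>(C3)\<close>
     (\<forall>n. \<forall>x\<in>C. q n x (es e n) = x) \<and>
     \<comment> \<open>(C4)\<close>
     (\<forall>n k. \<forall>x\<in>C. \<forall>ys\<in>tuples C k. n > k \<longrightarrow>
        q k x ys = q n x (ys @ map e [Suc k..<Suc n])) \<and>
     \<comment> \<open>(C5)\<close>
     (\<forall>n. \<forall>x\<in>C. \<forall>ys\<in>tuples C n. \<forall>zs\<in>tuples C n.
        q n (q n x ys) zs = q n x (map (\<lambda>y. q n y zs) ys)) \<and>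
     \<comment> \<open>(C6)\<close>
     (\<forall>n. \<forall>s\<in>T. \<forall>xs\<in>tuples C (ar s). \<forall>ys\<in>tuples C n.
        q n (sig s xs) ys = sig s (map (\<lambda>x. q n x ys) xs))"

definition indep :: "(nat \<Rightarrow> 'a \<Rightarrow> 'a list \<Rightarrow> 'a) \<Rightarrow> (nat \<Rightarrow> 'a) \<Rightarrow> 'a \<Rightarrow> nat \<Rightarrow> bool" where
  "indep q e a n \<longleftrightarrow> q n a (map e [1..<n] @ [e (Suc n)]) = a"

definition depends_on :: "(nat \<Rightarrow> 'a \<Rightarrow> 'a list \<Rightarrow> 'a) \<Rightarrow> (nat \<Rightarrow> 'a) \<Rightarrow> 'a \<Rightarrow> nat \<Rightarrow> bool" where
  "depends_on q e a n \<longleftrightarrow> n \<ge> 1 \<and> \<not> indep q e a n"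

definition dim_le :: "(nat \<Rightarrow> 'a \<Rightarrow> 'a list \<Rightarrow> 'a) \<Rightarrow> (nat \<Rightarrow> 'a) \<Rightarrow> 'a \<Rightarrow> nat \<Rightarrow> bool" where
  "dim_le q e a k \<longleftrightarrow> (\<forall>n. depends_on q e a n \<longrightarrow> n \<le> k)"

definition finite_dimensional :: "'a set \<Rightarrow> (nat \<Rightarrow> 'a \<Rightarrow> 'a list \<Rightarrow> 'a) \<Rightarrow> (nat \<Rightarrow> 'a) \<Rightarrow> bool" where
  "finite_dimensional C q e \<longleftrightarrow> (\<forall>a\<in>C. finite {n. depends_on q e a n})"

definition representable ::
  "'a set \<Rightarrow> (nat \<Rightarrow> 'a \<Rightarrow> 'a list \<Rightarrow> 'a) \<Rightarrow> (nat \<Rightarrow> 'a) \<Rightarrow> nat \<Rightarrow> ('a list \<Rightarrow> 'a) \<Rightarrow> bool" where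
  "representable C q e k f \<longleftrightarrow>
     (\<forall>xs\<in>tuples C k. f xs \<in> C) \<and>
     dim_le q e (f (es e k)) k \<and>
     (\<forall>xs\<in>tuples C k. f xs = q k (f (es e k)) xs)"

definition R_C :: "'a set \<Rightarrow> (nat \<Rightarrow> 'a \<Rightarrow> 'a list \<Rightarrow> 'a) \<Rightarrow> (nat \<Rightarrow> 'a) \<Rightarrow> (nat \<times> ('a list \<Rightarrow> 'a)) set" where
  "R_C C q e = {(k, f). f = ext_op C k f \<and> representable C q e k f}"

inductive_set Clo :: "'a set \<Rightarrow> 's set \<Rightarrow> ('s \<Rightarrow> nat) \<Rightarrow> ('s \<Rightarrow> 'a list \<Rightarrow> 'a)
    \<Rightarrow> (nat \<times> ('a list \<Rightarrow> 'a)) set"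
  for C :: "'a set" and T :: "'s set" and ar :: "'s \<Rightarrow> nat" and sig :: "'s \<Rightarrow> 'a list \<Rightarrow> 'a" where
  proj: "i < k \<Longrightarrow> (k, ext_op C k (\<lambda>xs. xs ! i)) \<in> Clo C T ar sig"
| basic: "s \<in> T \<Longrightarrow> (ar s, ext_op C (ar s) (sig s)) \<in> Clo C T ar sig"
| comp: "(n, f) \<in> Clo C T ar sig \<Longrightarrow> length gs = n \<Longrightarrow> (\<forall>g\<in>set gs. (k, g) \<in> Clo C T ar sig)
          \<Longrightarrow> (k, ext_op C k (\<lambda>xs. f (map (\<lambda>g. g xs) gs))) \<in> Clo C T ar sig"
| restr: "(Suc k, f) \<in> Clo C T ar sig \<Longrightarrow>
          (\<forall>xs\<in>tuples C k. \<forall>a\<in>C. \<forall>b\<in>C. f (xs @ [a]) = f (xs @ [b])) \<Longrightarrow> c \<in> C \<Longrightarrow>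
          (k, ext_op C k (\<lambda>xs. f (xs @ [c]))) \<in> Clo C T ar sig"

definition minimal :: "'a set \<Rightarrow> (nat \<Rightarrow> 'a) \<Rightarrow> (nat \<times> ('a list \<Rightarrow> 'a)) set \<Rightarrow> bool" where
  "minimal C e ops \<longleftrightarrow>
     (\<forall>S. S \<subseteq> C \<and> (\<forall>i\<ge>1. e i \<in> S) \<and> (\<forall>(k, f)\<in>ops. \<forall>xs\<in>tuples S k. f xs \<in> S) \<longrightarrow> S = C)"

definition sig_ops :: "'s set \<Rightarrow> ('s \<Rightarrow> nat) \<Rightarrow> ('s \<Rightarrow> 'a list \<Rightarrow> 'a) \<Rightarrow> (nat \<times> ('a list \<Rightarrow> 'a)) set" where
  "sig_ops T ar sig = (\<lambda>s. (ar s, sig s)) ` T"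

end

theory Submission
  imports Defs
begin

text \<open>An element \<open>a\<close> of dimension at most \<open>k\<close> is the value of the representable operation
\<open>q\<^sub>k(a, -)\<close> at \<open>(e\<^sub>1, \<dots>, e\<^sub>k)\<close>; this gives (i). Representable operations contain the
projections and the basic operations and, by (C5) and (C6), are closed under composition and
restriction, so \<open>Clo C\<^sub>\<tau> \<subseteq> R\<^sub>C\<close> always. If \<open>C\<close> is minimal, the elements \<open>a\<close> for which
\<open>q\<^sub>N(a, -)\<close> is a term operation for all large \<open>N\<close> contain the \<open>e\<^sub>i\<close> and are closed under the
basic operations by (C6); so every \<open>a\<close> has this property, and restricting away the variables
beyond its dimension shows \<open>R\<^sub>C \<subseteq> Clo C\<^sub>\<tau>\<close>. Conversely, if \<open>R\<^sub>C = Clo C\<^sub>\<tau>\<close>, a subset closed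
under the basic operations is closed under \<open>R\<^sub>C\<close>, hence equals \<open>C\<close> by (i).\<close>

lemma minimalI:
  assumes "\<And>S. S \<subseteq> C \<Longrightarrow> (\<And>i. 1 \<le> i \<Longrightarrow> e i \<in> S) \<Longrightarrow>
      (\<And>k f xs. (k, f) \<in> ops \<Longrightarrow> xs \<in> tuples S k \<Longrightarrow> f xs \<in> S) \<Longrightarrow> C \<subseteq> S"
  shows "minimal C e ops"
  unfolding minimal_def
proof (intro allI impI)
  fix S assume S: "S \<subseteq> C \<and> (\<forall>i\<ge>1. e i \<in> S) \<and> (\<forall>(k, f)\<in>ops. \<forall>xs\<in>tuples S k. f xs \<in> S)"
  then have "C \<subseteq> S" by (intro assms) auto
  with S show "S = C" by blast
qed

lemma minimalD:
  assumes "minimal C e ops" "S \<subseteq> C" "\<And>i. 1 \<le> i \<Longrightarrow> e i \<in> S"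
    "\<And>k f xs. (k, f) \<in> ops \<Longrightarrow> xs \<in> tuples S k \<Longrightarrow> f xs \<in> S"
  shows "S = C"
proof -
  have "S \<subseteq> C \<and> (\<forall>i\<ge>1. e i \<in> S) \<and> (\<forall>(k, f)\<in>ops. \<forall>xs\<in>tuples S k. f xs \<in> S)"
    using assms(2-4) by auto
  with assms(1) show ?thesis unfolding minimal_def by blast
qed

lemma finite_dimensional_dim_le:
  assumes "finite_dimensional C q e" "a \<in> C"
  shows "\<exists>k. dim_le q e a k"
proof -
  have "finite {n. depends_on q e a n}" using assms by (simp add: finite_dimensional_def)
  then have "dim_le q e a (Max (insert 0 {n. depends_on q e a n}))" by (auto simp: dim_le_def)
  then show ?thesis ..
qed

locale clone_algebra =
  fixes C :: "'a set" and T :: "'s set" and ar :: "'s \<Rightarrow> nat"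
    and sig :: "'s \<Rightarrow> 'a list \<Rightarrow> 'a"
    and q :: "nat \<Rightarrow> 'a \<Rightarrow> 'a list \<Rightarrow> 'a" and e :: "nat \<Rightarrow> 'a"
  assumes clone_alg: "clone_alg C T ar sig q e"
begin

lemma e_closed: "1 \<le> i \<Longrightarrow> e i \<in> C"
  using clone_alg by (simp add: clone_alg_def)

lemma sig_closed: "s \<in> T \<Longrightarrow> xs \<in> tuples C (ar s) \<Longrightarrow> sig s xs \<in> C"
  using clone_alg by (simp add: clone_alg_def)

lemma q_closed: "x \<in> C \<Longrightarrow> ys \<in> tuples C n \<Longrightarrow> q n x ys \<in> C"
  using clone_alg by (simp add: clone_alg_def)

lemma q_e: "xs \<in> tuples C n \<Longrightarrow> 1 \<le> i \<Longrightarrow> i \<le> n \<Longrightarrow> q n (e i) xs = xs ! (i - 1)"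
  using clone_alg by (simp add: clone_alg_def)

lemma q_e_beyond: "xs \<in> tuples C n \<Longrightarrow> n < j \<Longrightarrow> q n (e j) xs = e j"
  using clone_alg unfolding clone_alg_def by (elim conjE) blast

lemma q_es: "x \<in> C \<Longrightarrow> q n x (es e n) = x"
  using clone_alg by (simp add: clone_alg_def)

lemma q_pad_less:
  "x \<in> C \<Longrightarrow> ys \<in> tuples C k \<Longrightarrow> k < n \<Longrightarrow> q k x ys = q n x (ys @ map e [Suc k..<Suc n])"
  using clone_alg by (simp add: clone_alg_def)

lemma q_superassoc: "x \<in> C \<Longrightarrow> ys \<in> tuples C n \<Longrightarrow> zs \<in> tuples C n \<Longrightarrow>
    q n (q n x ys) zs = q n x (map (\<lambda>y. q n y zs) ys)"
  using clone_alg by (simp add: clone_alg_def)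

lemma q_sig: "s \<in> T \<Longrightarrow> xs \<in> tuples C (ar s) \<Longrightarrow> ys \<in> tuples C n \<Longrightarrow>
    q n (sig s xs) ys = sig s (map (\<lambda>x. q n x ys) xs)"
  using clone_alg by (simp add: clone_alg_def)

lemma es_in_tuples: "es e n \<in> tuples C n"
  by (auto simp: es_def tuples_def intro: e_closed)

lemma length_es [simp]: "length (es e n) = n"
  by (simp add: es_def)

lemma take_es_skip: "k < n \<Longrightarrow> take k (map e [1..<n] @ [e (Suc n)]) = es e k"
  by (simp add: es_def take_map)

lemma es_skip_in_tuples: "1 \<le> n \<Longrightarrow> map e [1..<n] @ [e (Suc n)] \<in> tuples C n"
  by (auto simp: tuples_def intro: e_closed)

lemma padding_in_tuples: "ys \<in> tuples C k \<Longrightarrow> k \<le> n \<Longrightarrow> ys @ map e [Suc k..<Suc n] \<in> tuples C n"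
  by (auto simp: tuples_def intro: e_closed simp del: upt_Suc)

lemma map_q_in_tuples: "ys \<in> tuples C m \<Longrightarrow> zs \<in> tuples C n \<Longrightarrow> map (\<lambda>y. q n y zs) ys \<in> tuples C m"
  by (auto simp: tuples_def intro: q_closed)

lemma map_q_es:
  assumes zs: "zs \<in> tuples C n" and k: "k \<le> n"
  shows "map (\<lambda>y. q n y zs) (es e k) = take k zs"
proof (rule nth_equalityI)
  show "length (map (\<lambda>y. q n y zs) (es e k)) = length (take k zs)"
    using zs k by (simp add: tuples_def)
  fix i assume "i < length (map (\<lambda>y. q n y zs) (es e k))"
  then have i: "i < k" by simp
  then have "es e k ! i = e (Suc i)" by (simp add: es_def del: upt_Suc)
  then show "map (\<lambda>y. q n y zs) (es e k) ! i = take k zs ! i"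
    using i k q_e[OF zs, of "Suc i"] by simp
qed

lemma q_pad:
  assumes "x \<in> C" "ys \<in> tuples C k" "k \<le> n"
  shows "q k x ys = q n x (ys @ map e [Suc k..<Suc n])"
proof (cases "k = n")
  case True
  then show ?thesis by simp
next
  case False
  with assms show ?thesis using q_pad_less[OF assms(1,2)] by simp
qed

lemma q_snoc_indep:
  assumes x: "x \<in> C" and indep: "indep q e x (Suc n)" and ys: "ys \<in> tuples C n" and c: "c \<in> C"
  shows "q (Suc n) x (ys @ [c]) = q n x ys"
proof -
  let ?w = "es e n @ [e (Suc (Suc n))]"
  have w: "?w \<in> tuples C (Suc n)"
    using es_in_tuples e_closed by (simp add: tuples_def)
  have x_w: "q (Suc n) x ?w = x"
    using indep by (simp add: indep_def es_def)
  \<comment> \<open>Substituting into \<open>x = q\<^sub>n\<^sub>+\<^sub>1(x, e\<^sub>1, \<dots>, e\<^sub>n, e\<^sub>n\<^sub>+\<^sub>2)\<close> discards the last argument.\<close>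
  have last_irrelevant: "q (Suc n) x (ys @ [d]) = q (Suc n) x (ys @ [e (Suc (Suc n))])"
    if d: "d \<in> C" for d
  proof -
    have yd: "ys @ [d] \<in> tuples C (Suc n)" using ys d by (simp add: tuples_def)
    have "q (Suc n) x (ys @ [d]) = q (Suc n) (q (Suc n) x ?w) (ys @ [d])" using x_w by simp
    also have "\<dots> = q (Suc n) x (map (\<lambda>y. q (Suc n) y (ys @ [d])) ?w)"
      using q_superassoc[OF x w yd] .
    also have "map (\<lambda>y. q (Suc n) y (ys @ [d])) ?w = ys @ [e (Suc (Suc n))]"
      using map_q_es[OF yd, of n] q_e_beyond[OF yd, of "Suc (Suc n)"] ys by (simp add: tuples_def)
    finally show ?thesis .
  qed
  have "q (Suc n) x (ys @ [c]) = q (Suc n) x (ys @ [e (Suc n)])"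
    using last_irrelevant[OF c] last_irrelevant[OF e_closed, of "Suc n"] by simp
  also have "\<dots> = q n x ys"
    using q_pad_less[OF x ys, of "Suc n"] by simp
  finally show ?thesis .
qed

lemma indep_if_dim_le: "dim_le q e x k \<Longrightarrow> k < n \<Longrightarrow> indep q e x n"
  unfolding dim_le_def depends_on_def by (rule ccontr) (auto dest: spec[of _ n])

lemma dim_le_mono: "dim_le q e x k \<Longrightarrow> k \<le> n \<Longrightarrow> dim_le q e x n"
  unfolding dim_le_def by (auto intro: le_trans)

lemma q_eq_q_take:
  assumes x: "x \<in> C" and dim: "dim_le q e x k"
  shows "k \<le> n \<Longrightarrow> ys \<in> tuples C n \<Longrightarrow> q n x ys = q k x (take k ys)"
proof (induction n arbitrary: ys)
  case 0
  then show ?case by (simp add: tuples_def)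
next
  case (Suc n)
  show ?case
  proof (cases "k = Suc n")
    case True
    with Suc.prems show ?thesis by (simp add: tuples_def)
  next
    case False
    with Suc.prems have kn: "k \<le> n" by simp
    obtain zs c where ys: "ys = zs @ [c]"
      using Suc.prems(2) by (cases ys rule: rev_cases) (auto simp: tuples_def)
    have zs: "zs \<in> tuples C n" and c: "c \<in> C"
      using Suc.prems(2) by (auto simp: ys tuples_def)
    have "q (Suc n) x ys = q n x zs"
      unfolding ys using q_snoc_indep[OF x indep_if_dim_le[OF dim] zs c] kn by simp
    also have "\<dots> = q k x (take k zs)" using Suc.IH[OF kn zs] .
    also have "take k zs = take k ys" using kn zs by (simp add: ys tuples_def)
    finally show ?thesis .
  qed
qed

lemma dim_leI:
  assumes x: "x \<in> C"
    and restrict: "\<And>n ys. k < n \<Longrightarrow> ys \<in> tuples C n \<Longrightarrow> q n x ys = q k x (take k ys)"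
  shows "dim_le q e x k"
  unfolding dim_le_def depends_on_def
proof (intro allI impI; rule ccontr)
  fix n assume n: "1 \<le> n \<and> \<not> indep q e x n" and "\<not> n \<le> k"
  then have kn: "k < n" by simp
  have "q n x (map e [1..<n] @ [e (Suc n)]) = q k x (take k (map e [1..<n] @ [e (Suc n)]))"
    using restrict[OF kn es_skip_in_tuples] n by simp
  also have "\<dots> = x"
    using take_es_skip[OF kn] q_es[OF x] by simp
  finally show False using n by (simp add: indep_def)
qed

lemma take_in_tuples: "ys \<in> tuples C n \<Longrightarrow> k \<le> n \<Longrightarrow> take k ys \<in> tuples C k"
  by (auto simp: tuples_def dest: in_set_takeD)

lemma dim_le_e:
  assumes j: "1 \<le> j" "j \<le> k"
  shows "dim_le q e (e j) k"
proof (rule dim_leI)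
  show "e j \<in> C" using e_closed j by simp
  fix n ys assume n: "k < n" and ys: "ys \<in> tuples C n"
  then show "q n (e j) ys = q k (e j) (take k ys)"
    using j q_e[OF ys] q_e[OF take_in_tuples[OF ys]] by simp
qed

lemma dim_le_sig_es:
  assumes s: "s \<in> T"
  shows "dim_le q e (sig s (es e (ar s))) (ar s)"
proof (rule dim_leI)
  show "sig s (es e (ar s)) \<in> C" using sig_closed[OF s es_in_tuples] .
  fix n ys assume n: "ar s < n" and ys: "ys \<in> tuples C n"
  have ys_s: "take (ar s) ys \<in> tuples C (ar s)" using take_in_tuples[OF ys] n by simp
  show "q n (sig s (es e (ar s))) ys = q (ar s) (sig s (es e (ar s))) (take (ar s) ys)"
    using n ys ys_s by (simp add: q_sig[OF s es_in_tuples] map_q_es[OF ys] map_q_es[OF ys_s])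
qed

lemma q_superassoc_dim_le:
  assumes x: "x \<in> C" and dim_x: "dim_le q e x n" and ys: "ys \<in> tuples C n"
    and dim_ys: "\<forall>y\<in>set ys. dim_le q e y k" and zs: "zs \<in> tuples C k"
  shows "q k (q n x ys) zs = q n x (map (\<lambda>y. q k y zs) ys)"
proof -
  define m where "m = max n k"
  define zs' where "zs' = zs @ map e [Suc k..<Suc m]"
  define ys' where "ys' = ys @ map e [Suc n..<Suc m]"
  have zs': "zs' \<in> tuples C m" unfolding zs'_def m_def by (rule padding_in_tuples[OF zs]) simp
  have ys': "ys' \<in> tuples C m" unfolding ys'_def m_def by (rule padding_in_tuples[OF ys]) simp
  have x_ys: "q n x ys = q m x ys'"
    unfolding ys'_def m_def by (rule q_pad[OF x ys]) simp
  have "q k (q n x ys) zs = q m (q n x ys) zs'"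
    unfolding zs'_def m_def by (rule q_pad[OF q_closed[OF x ys] zs]) simp
  also have "\<dots> = q m (q m x ys') zs'" by (simp only: x_ys)
  also have "\<dots> = q m x (map (\<lambda>y. q m y zs') ys')" using q_superassoc[OF x ys' zs'] .
  also have "\<dots> = q n x (map (\<lambda>y. q m y zs') ys)"
    using q_eq_q_take[OF x dim_x _ map_q_in_tuples[OF ys' zs']] ys
    by (simp add: m_def ys'_def tuples_def)
  also have "map (\<lambda>y. q m y zs') ys = map (\<lambda>y. q k y zs) ys"
  proof (rule map_cong[OF refl])
    fix y assume y: "y \<in> set ys"
    then have "y \<in> C" using ys by (auto simp: tuples_def)
    then have "q m y zs' = q k y (take k zs')"
      using q_eq_q_take[OF _ _ _ zs'] dim_ys y by (simp add: m_def)
    also have "take k zs' = zs" using zs by (simp add: zs'_def tuples_def)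
    finally show "q m y zs' = q k y zs" .
  qed
  finally show ?thesis .
qed

lemma dim_le_q:
  assumes x: "x \<in> C" and dim_x: "dim_le q e x n" and ys: "ys \<in> tuples C n"
    and dim_ys: "\<forall>y\<in>set ys. dim_le q e y k"
  shows "dim_le q e (q n x ys) k"
proof (rule dim_leI)
  show "q n x ys \<in> C" using q_closed[OF x ys] .
  fix p zs assume p: "k < p" and zs: "zs \<in> tuples C p"
  have zs_k: "take k zs \<in> tuples C k" using take_in_tuples[OF zs] p by simp
  have "\<forall>y\<in>set ys. dim_le q e y p" using dim_ys p by (auto intro: dim_le_mono)
  then have "q p (q n x ys) zs = q n x (map (\<lambda>y. q p y zs) ys)"
    using q_superassoc_dim_le[OF x dim_x ys _ zs] by simp
  also have "map (\<lambda>y. q p y zs) ys = map (\<lambda>y. q k y (take k zs)) ys"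
    using q_eq_q_take[OF _ _ _ zs] dim_ys ys p by (auto simp: tuples_def)
  also have "q n x \<dots> = q k (q n x ys) (take k zs)"
    using q_superassoc_dim_le[OF x dim_x ys dim_ys zs_k] by simp
  finally show "q p (q n x ys) zs = q k (q n x ys) (take k zs)" .
qed

lemma ext_op_cong: "(\<And>xs. xs \<in> tuples C k \<Longrightarrow> f xs = g xs) \<Longrightarrow> ext_op C k f = ext_op C k g"
  unfolding ext_op_def by auto

lemma R_C_iff: "(k, f) \<in> R_C C q e \<longleftrightarrow> (\<exists>a\<in>C. dim_le q e a k \<and> f = ext_op C k (q k a))"
proof
  assume "(k, f) \<in> R_C C q e"
  then have f: "f = ext_op C k f" and rep: "representable C q e k f"
    by (auto simp: R_C_def)
  have "ext_op C k f = ext_op C k (q k (f (es e k)))"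
    using rep unfolding representable_def by (intro ext_op_cong) blast
  with f have "f = ext_op C k (q k (f (es e k)))" by simp
  moreover have "f (es e k) \<in> C" "dim_le q e (f (es e k)) k"
    using rep es_in_tuples unfolding representable_def by blast+
  ultimately show "\<exists>a\<in>C. dim_le q e a k \<and> f = ext_op C k (q k a)" by blast
next
  assume "\<exists>a\<in>C. dim_le q e a k \<and> f = ext_op C k (q k a)"
  then obtain a where a: "a \<in> C" "dim_le q e a k" and f: "f = ext_op C k (q k a)" by blast
  have f_es: "f (es e k) = a" using a by (simp add: f ext_op_def es_in_tuples q_es)
  have "f = ext_op C k f" by (simp add: f ext_op_def fun_eq_iff)
  moreover have "representable C q e k f"
    using a by (simp add: representable_def f_es) (simp add: f ext_op_def q_closed)
  ultimately show "(k, f) \<in> R_C C q e" by (simp add: R_C_def)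
qed

lemma minimal_R_C:
  assumes "finite_dimensional C q e"
  shows "minimal C e (R_C C q e)"
proof (rule minimalI)
  fix S assume "S \<subseteq> C" and e_S: "\<And>i. 1 \<le> i \<Longrightarrow> e i \<in> S"
    and R_S: "\<And>k f xs. (k, f) \<in> R_C C q e \<Longrightarrow> xs \<in> tuples S k \<Longrightarrow> f xs \<in> S"
  show "C \<subseteq> S"
  proof
    fix a assume a: "a \<in> C"
    obtain k where "dim_le q e a k" using finite_dimensional_dim_le[OF assms a] ..
    with a have "(k, ext_op C k (q k a)) \<in> R_C C q e" unfolding R_C_iff by blast
    moreover have "es e k \<in> tuples S k" using e_S by (auto simp: es_def tuples_def)
    ultimately have "ext_op C k (q k a) (es e k) \<in> S" by (rule R_S)
    with a show "a \<in> S" by (simp add: ext_op_def es_in_tuples q_es)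
  qed
qed

lemma proj_eq_q_e:
  assumes "i < k"
  shows "ext_op C k (\<lambda>xs. xs ! i) = ext_op C k (q k (e (Suc i)))"
  using q_e assms by (intro ext_op_cong) simp

lemma sig_eq_q_sig_es:
  assumes s: "s \<in> T"
  shows "ext_op C (ar s) (sig s) = ext_op C (ar s) (q (ar s) (sig s (es e (ar s))))"
proof (rule ext_op_cong)
  fix xs assume xs: "xs \<in> tuples C (ar s)"
  then show "sig s xs = q (ar s) (sig s (es e (ar s))) xs"
    by (simp add: q_sig[OF s es_in_tuples xs] map_q_es[OF xs] tuples_def)
qed

lemma R_C_D:
  assumes "(k, f) \<in> R_C C q e"
  shows "f (es e k) \<in> C" and "dim_le q e (f (es e k)) k" and "f = ext_op C k (q k (f (es e k)))"
proof -
  obtain a where a: "a \<in> C" "dim_le q e a k" and f: "f = ext_op C k (q k a)"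
    using assms by (auto simp: R_C_iff)
  have "f (es e k) = a" using a by (simp add: f ext_op_def es_in_tuples q_es)
  with a f show "f (es e k) \<in> C" "dim_le q e (f (es e k)) k" "f = ext_op C k (q k (f (es e k)))"
    by simp_all
qed

lemma R_C_restrict:
  assumes f: "(Suc k, f) \<in> R_C C q e"
    and last_irrelevant: "\<forall>xs\<in>tuples C k. \<forall>c\<in>C. \<forall>d\<in>C. f (xs @ [c]) = f (xs @ [d])"
    and c: "c \<in> C"
  shows "(k, ext_op C k (\<lambda>xs. f (xs @ [c]))) \<in> R_C C q e"
proof -
  obtain a where a: "a \<in> C" "dim_le q e a (Suc k)" and f_eq: "f = ext_op C (Suc k) (q (Suc k) a)"
    using f by (auto simp: R_C_iff)
  have e_Suc: "e (Suc k) \<in> C" using e_closed by simp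
  have q_snoc: "q (Suc k) a (xs @ [d]) = q k a xs" if xs: "xs \<in> tuples C k" and d: "d \<in> C" for xs d
  proof -
    have "q (Suc k) a (xs @ [d]) = f (xs @ [d])"
      using xs d by (simp add: f_eq ext_op_def tuples_def)
    also have "\<dots> = f (xs @ [e (Suc k)])"
      using last_irrelevant xs d e_Suc by blast
    also have "\<dots> = q (Suc k) a (xs @ [e (Suc k)])"
      using xs e_Suc by (simp add: f_eq ext_op_def tuples_def)
    also have "\<dots> = q k a xs" using q_pad_less[OF a(1) xs, of "Suc k"] by simp
    finally show ?thesis .
  qed
  have "dim_le q e a k"
  proof (rule dim_leI[OF a(1)])
    fix n ys assume n: "k < n" and ys: "ys \<in> tuples C n"
    have "take k ys \<in> tuples C k" using take_in_tuples[OF ys] n by simp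
    moreover have "ys ! k \<in> C" and "k < length ys" using ys n by (auto simp: tuples_def)
    ultimately have "q (Suc k) a (take (Suc k) ys) = q k a (take k ys)"
      by (simp add: take_Suc_conv_app_nth q_snoc)
    then show "q n a ys = q k a (take k ys)"
      using q_eq_q_take[OF a _ ys] n by simp
  qed
  moreover have "ext_op C k (\<lambda>xs. f (xs @ [c])) = ext_op C k (q k a)"
  proof (rule ext_op_cong)
    fix xs assume xs: "xs \<in> tuples C k"
    then have "f (xs @ [c]) = q (Suc k) a (xs @ [c])"
      using c by (simp add: f_eq ext_op_def tuples_def)
    with xs c show "f (xs @ [c]) = q k a xs" by (simp add: q_snoc)
  qed
  ultimately show ?thesis using a(1) by (auto simp: R_C_iff)
qed

lemma R_C_comp:
  assumes f: "(n, f) \<in> R_C C q e" and "length gs = n" and gs: "\<forall>g\<in>set gs. (k, g) \<in> R_C C q e"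
  shows "(k, ext_op C k (\<lambda>xs. f (map (\<lambda>g. g xs) gs))) \<in> R_C C q e"
proof -
  obtain a where a: "a \<in> C" "dim_le q e a n" and f_eq: "f = ext_op C n (q n a)"
    using f by (auto simp: R_C_iff)
  define bs where "bs = map (\<lambda>g. g (es e k)) gs"
  have bs: "bs \<in> tuples C n" and dim_bs: "\<forall>b\<in>set bs. dim_le q e b k"
    using R_C_D(1,2) gs \<open>length gs = n\<close> by (auto simp: bs_def tuples_def)
  have g_xs: "g xs = q k (g (es e k)) xs" if "g \<in> set gs" and xs: "xs \<in> tuples C k" for g xs
    using fun_cong[OF R_C_D(3), of k g xs] gs that by (simp add: ext_op_def)
  have "ext_op C k (\<lambda>xs. f (map (\<lambda>g. g xs) gs)) = ext_op C k (q k (q n a bs))"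
  proof (rule ext_op_cong)
    fix xs assume xs: "xs \<in> tuples C k"
    have "map (\<lambda>g. g xs) gs = map (\<lambda>b. q k b xs) bs"
      using g_xs xs by (simp add: bs_def)
    moreover have "map (\<lambda>b. q k b xs) bs \<in> tuples C n" using map_q_in_tuples[OF bs xs] .
    ultimately show "f (map (\<lambda>g. g xs) gs) = q k (q n a bs) xs"
      using q_superassoc_dim_le[OF a bs dim_bs xs] by (simp add: f_eq ext_op_def)
  qed
  then show ?thesis
    using q_closed[OF a(1) bs] dim_le_q[OF a bs dim_bs] by (auto simp: R_C_iff)
qed

lemma Clo_subset_R_C: "Clo C T ar sig \<subseteq> R_C C q e"
proof clarify
  fix k f assume "(k, f) \<in> Clo C T ar sig"
  then show "(k, f) \<in> R_C C q e"
  proof (induction rule: Clo.induct)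
    case (proj i k)
    then show ?case
      using e_closed dim_le_e[of "Suc i" k] by (auto simp: proj_eq_q_e R_C_iff)
  next
    case (basic s)
    then show ?case
      using sig_closed[OF basic es_in_tuples] dim_le_sig_es[OF basic]
      by (auto simp: sig_eq_q_sig_es R_C_iff)
  next
    case (comp n f gs k)
    then show ?case by (auto intro: R_C_comp)
  next
    case (restr k f c)
    then show ?case by (auto intro: R_C_restrict)
  qed
qed

lemma Clo_represented_restrict:
  assumes a: "a \<in> C" "dim_le q e a k" and "k \<le> N"
    and N: "(N, ext_op C N (q N a)) \<in> Clo C T ar sig"
  shows "(k, ext_op C k (q k a)) \<in> Clo C T ar sig"
  using \<open>k \<le> N\<close> N
proof (induction N rule: dec_induct)
  case base
  then show ?case .
next
  case (step n)
  let ?F = "ext_op C (Suc n) (q (Suc n) a)"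
  have F_snoc: "?F (xs @ [c]) = q n a xs" if xs: "xs \<in> tuples C n" and c: "c \<in> C" for xs c
  proof -
    have "xs @ [c] \<in> tuples C (Suc n)" using xs c by (simp add: tuples_def)
    then have "?F (xs @ [c]) = q (Suc n) a (xs @ [c])" by (simp add: ext_op_def)
    also have "\<dots> = q n a xs"
      using q_snoc_indep[OF a(1) indep_if_dim_le[OF a(2)] xs c] step.hyps(1) by simp
    finally show ?thesis .
  qed
  have e1: "e 1 \<in> C" using e_closed by simp
  have "(n, ext_op C n (\<lambda>xs. ?F (xs @ [e 1]))) \<in> Clo C T ar sig"
    using step.prems e1 by (intro Clo.restr) (simp_all add: F_snoc)
  moreover have "ext_op C n (\<lambda>xs. ?F (xs @ [e 1])) = ext_op C n (q n a)"
    using e1 by (intro ext_op_cong) (simp add: F_snoc)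
  ultimately show ?case using step.IH by simp
qed

lemma e_represented_in_Clo:
  assumes "1 \<le> i" "i \<le> N"
  shows "(N, ext_op C N (q N (e i))) \<in> Clo C T ar sig"
proof -
  have "i - 1 < N" using assms by simp
  with Clo.proj[OF this, of C T ar sig] proj_eq_q_e[OF this] assms show ?thesis by simp
qed

lemma sig_represented_in_Clo:
  assumes s: "s \<in> T" and xs: "xs \<in> tuples C (ar s)"
    and xs_Clo: "\<forall>x\<in>set xs. (N, ext_op C N (q N x)) \<in> Clo C T ar sig"
  shows "(N, ext_op C N (q N (sig s xs))) \<in> Clo C T ar sig"
proof -
  let ?gs = "map (\<lambda>x. ext_op C N (q N x)) xs"
  have "(N, ext_op C N (\<lambda>ys. ext_op C (ar s) (sig s) (map (\<lambda>g. g ys) ?gs))) \<in> Clo C T ar sig"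
    using xs xs_Clo by (intro Clo.comp[OF Clo.basic[OF s]]) (auto simp: tuples_def)
  moreover have "ext_op C N (\<lambda>ys. ext_op C (ar s) (sig s) (map (\<lambda>g. g ys) ?gs))
      = ext_op C N (q N (sig s xs))"
  proof (rule ext_op_cong)
    fix ys assume ys: "ys \<in> tuples C N"
    then have args: "map (\<lambda>g. g ys) ?gs = map (\<lambda>x. q N x ys) xs" by (simp add: ext_op_def)
    show "ext_op C (ar s) (sig s) (map (\<lambda>g. g ys) ?gs) = q N (sig s xs) ys"
      unfolding args using map_q_in_tuples[OF xs ys] q_sig[OF s xs ys] by (simp add: ext_op_def)
  qed
  ultimately show ?thesis by simp
qed

lemma eventually_represented_in_Clo:
  assumes min: "minimal C e (sig_ops T ar sig)" and a: "a \<in> C"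
  shows "eventually (\<lambda>N. (N, ext_op C N (q N a)) \<in> Clo C T ar sig) sequentially"
proof -
  define S where "S = {x \<in> C. eventually (\<lambda>N. (N, ext_op C N (q N x)) \<in> Clo C T ar sig) sequentially}"
  have "S = C"
  proof (rule minimalD[OF min])
    show "S \<subseteq> C" by (auto simp: S_def)
    show "e i \<in> S" if "1 \<le> i" for i
      using that e_closed e_represented_in_Clo by (auto simp: S_def eventually_sequentially)
    show "f xs \<in> S" if kf: "(k, f) \<in> sig_ops T ar sig" and xs_S: "xs \<in> tuples S k" for k f xs
    proof -
      obtain s where s: "s \<in> T" and k: "k = ar s" and f: "f = sig s"
        using kf by (auto simp: sig_ops_def)
      have xs: "xs \<in> tuples C (ar s)" using xs_S k by (auto simp: S_def tuples_def)
      have "eventually (\<lambda>N. \<forall>x\<in>set xs. (N, ext_op C N (q N x)) \<in> Clo C T ar sig) sequentially"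
        using xs_S by (intro eventually_ball_finite) (auto simp: S_def tuples_def)
      then show "f xs \<in> S"
        unfolding S_def f using sig_closed[OF s xs] sig_represented_in_Clo[OF s xs]
        by (auto elim: eventually_mono)
    qed
  qed
  with a show ?thesis by (auto simp: S_def)
qed

lemma R_C_subset_Clo:
  assumes min: "minimal C e (sig_ops T ar sig)"
  shows "R_C C q e \<subseteq> Clo C T ar sig"
proof clarify
  fix k f assume "(k, f) \<in> R_C C q e"
  then obtain a where a: "a \<in> C" "dim_le q e a k" and f: "f = ext_op C k (q k a)"
    by (auto simp: R_C_iff)
  obtain N where "\<forall>n\<ge>N. (n, ext_op C n (q n a)) \<in> Clo C T ar sig"
    using eventually_represented_in_Clo[OF min a(1)] by (auto simp: eventually_sequentially)
  then have "(max N k, ext_op C (max N k) (q (max N k) a)) \<in> Clo C T ar sig" by simp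
  then show "(k, f) \<in> Clo C T ar sig"
    unfolding f by (rule Clo_represented_restrict[OF a, rotated]) simp
qed

lemma Clo_closed:
  assumes S: "S \<subseteq> C" "\<And>i. 1 \<le> i \<Longrightarrow> e i \<in> S"
    and sig_S: "\<And>k f xs. (k, f) \<in> sig_ops T ar sig \<Longrightarrow> xs \<in> tuples S k \<Longrightarrow> f xs \<in> S"
  shows "(k, f) \<in> Clo C T ar sig \<Longrightarrow> \<forall>xs\<in>tuples S k. f xs \<in> S"
proof (induction rule: Clo.induct)
  case (proj i k)
  show ?case
  proof
    fix xs assume xs: "xs \<in> tuples S k"
    then have "xs \<in> tuples C k" "xs ! i \<in> S" using S(1) proj by (auto simp: tuples_def)
    then show "ext_op C k (\<lambda>xs. xs ! i) xs \<in> S" by (simp add: ext_op_def)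
  qed
next
  case (basic s)
  show ?case
  proof
    fix xs assume xs: "xs \<in> tuples S (ar s)"
    then have "xs \<in> tuples C (ar s)" using S(1) by (auto simp: tuples_def)
    moreover have "sig s xs \<in> S" using sig_S[of "ar s" "sig s" xs] basic xs by (simp add: sig_ops_def)
    ultimately show "ext_op C (ar s) (sig s) xs \<in> S" by (simp add: ext_op_def)
  qed
next
  case (comp n f gs k)
  show ?case
  proof
    fix xs assume xs: "xs \<in> tuples S k"
    then have "map (\<lambda>g. g xs) gs \<in> tuples S n" using comp by (auto simp: tuples_def)
    then have "f (map (\<lambda>g. g xs) gs) \<in> S" using comp by blast
    moreover have "xs \<in> tuples C k" using xs S(1) by (auto simp: tuples_def)
    ultimately show "ext_op C k (\<lambda>xs. f (map (\<lambda>g. g xs) gs)) xs \<in> S" by (simp add: ext_op_def)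
  qed
next
  case (restr k f c)
  show ?case
  proof
    fix xs assume xs: "xs \<in> tuples S k"
    then have xs_C: "xs \<in> tuples C k" using S(1) by (auto simp: tuples_def)
    have e1: "e 1 \<in> S" "e 1 \<in> C" using S(2) e_closed by auto
    have "f (xs @ [c]) = f (xs @ [e 1])" using restr.hyps(2) xs_C restr.hyps(3) e1(2) by blast
    moreover have "xs @ [e 1] \<in> tuples S (Suc k)" using xs e1(1) by (simp add: tuples_def)
    then have "f (xs @ [e 1]) \<in> S" using restr.IH by blast
    ultimately show "ext_op C k (\<lambda>xs. f (xs @ [c])) xs \<in> S" using xs_C by (simp add: ext_op_def)
  qed
qed

lemma minimal_sig_ops_if_minimal_Clo:
  assumes "minimal C e (Clo C T ar sig)"
  shows "minimal C e (sig_ops T ar sig)"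
proof (rule minimalI)
  fix S assume S: "S \<subseteq> C" "\<And>i. 1 \<le> i \<Longrightarrow> e i \<in> S"
    and sig_S: "\<And>k f xs. (k, f) \<in> sig_ops T ar sig \<Longrightarrow> xs \<in> tuples S k \<Longrightarrow> f xs \<in> S"
  have "\<forall>xs\<in>tuples S k. f xs \<in> S" if "(k, f) \<in> Clo C T ar sig" for k f
    using S sig_S that by (rule Clo_closed)
  then have "S = C" using S by (intro minimalD[OF assms]) auto
  then show "C \<subseteq> S" by simp
qed

end

theorem proposition11p12:
  fixes C :: "'a set" and T :: "'s set" and ar :: "'s \<Rightarrow> nat"
    and sig :: "'s \<Rightarrow> 'a list \<Rightarrow> 'a"
    and q :: "nat \<Rightarrow> 'a \<Rightarrow> 'a list \<Rightarrow> 'a" and e :: "nat \<Rightarrow> 'a"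
  assumes "clone_alg C T ar sig q e"
    and "finite_dimensional C q e"
  shows "minimal C e (R_C C q e) \<and>
         (minimal C e (sig_ops T ar sig) \<longleftrightarrow> R_C C q e = Clo C T ar sig)"
proof -
  interpret clone_algebra C T ar sig q e by (rule clone_algebra.intro) fact
  have min_R: "minimal C e (R_C C q e)" using minimal_R_C[OF assms(2)] .
  have "R_C C q e = Clo C T ar sig" if "minimal C e (sig_ops T ar sig)"
    using R_C_subset_Clo[OF that] Clo_subset_R_C by (rule subset_antisym)
  moreover have "minimal C e (sig_ops T ar sig)" if "R_C C q e = Clo C T ar sig"
    using min_R that minimal_sig_ops_if_minimal_Clo by simp
  ultimately show ?thesis using min_R by blast
qed

end
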